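(* Let $K\ge1$ and consider the POMDP with world states $W=\{0,1,\ldots,K\}$, a single sensor state $S=\{1\}$, actions $A=\{1,\ldots,K\}$, where at each world state $w\in\{0,\ldots,K-1\}$ action $w+1$ takes the agent to $w+1$ with probability one and every other action takes it to $0$ with probability one, at $w=K$ every action takes the agent to $0$, and the reward is $R(w,a)=1$ if $w=K$ and $0$ otherwise. Write $\pi_a=\pi(a|1)$ for a stationary policy. The optimal memoryless policy (the maximizer over $\pi\in\Delta_A$ of the average reward $\mathcal{R}(\pi)=p^\pi(K)$, where $p^\pi$ is the stationary world state distribution) is given by $\pi_1=c$ and $\pi_i=\pi_{i-1}+c\,\pi_1\cdots\pi_{i-1}$ for $i=2,\ldots,K$, where $c$ is the unique real positive number for which the $\pi_i$ so defined satisfy $\pi_1+\cdots+\pi_K=1$.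
   Context: For a stationary policy (a distribution $(\pi_1,\ldots,\pi_K)$ over actions, since there is one sensor state), the world state chain has transition probabilities $p(w+1|w)=\pi_{w+1}$, $p(0|w)=1-\pi_{w+1}$ for $w<K$, and $p(0|K)=1$; $p^\pi$ denotes its stationary distribution, and the expected reward per time step is $p^\pi(K)$. *)

theory Defs
  imports Complex_Main
begin

text \<open>World states are 0..K, actions are 1..K, a single sensor state.\<close>

definition policy :: "nat \<Rightarrow> (nat \<Rightarrow> real) \<Rightarrow> bool" where
  "policy K q \<longleftrightarrow> (\<forall>a\<in>{1..K}. 0 \<le> q a) \<and> (\<Sum>a=1..K. q a) = 1"

definition trans :: "nat \<Rightarrow> (nat \<Rightarrow> real) \<Rightarrow> nat \<Rightarrow> nat \<Rightarrow> real" where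
  "trans K q w v =
     (if w < K then (if v = w + 1 then q (w + 1) else if v = 0 then 1 - q (w + 1) else 0)
      else (if v = 0 then 1 else 0))"

definition is_stationary :: "nat \<Rightarrow> (nat \<Rightarrow> real) \<Rightarrow> (nat \<Rightarrow> real) \<Rightarrow> bool" where
  "is_stationary K q p \<longleftrightarrow>
     (\<forall>v\<in>{0..K}. 0 \<le> p v) \<and> (\<forall>v. K < v \<longrightarrow> p v = 0) \<and> (\<Sum>v=0..K. p v) = 1 \<and>
     (\<forall>v\<in>{0..K}. p v = (\<Sum>w=0..K. p w * trans K q w v))"

definition stat_dist :: "nat \<Rightarrow> (nat \<Rightarrow> real) \<Rightarrow> nat \<Rightarrow> real" where
  "stat_dist K q = (THE p. is_stationary K q p)"

definition avg_reward :: "nat \<Rightarrow> (nat \<Rightarrow> real) \<Rightarrow> real" where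
  "avg_reward K q = stat_dist K q K"

fun opt_pol :: "real \<Rightarrow> nat \<Rightarrow> real" where
  "opt_pol c 0 = 0"
| "opt_pol c (Suc 0) = c"
| "opt_pol c (Suc (Suc i)) = opt_pol c (Suc i) + c * (\<Prod>j\<in>{1..Suc i}. opt_pol c j)"

end

theory Submission
  imports Defs
begin

text \<open>The stationary distribution of the world-state chain is proportional to the prefix
  products \<open>P v = \<pi> 1 * \<dots> * \<pi> v\<close>, so the reward is \<open>1 / (1 + G \<pi>)\<close> with
  \<open>G \<pi> = (\<Sum>j<K. P j / P K)\<close>. As a function of the \<open>ln \<pi> k\<close>, each summand of \<open>G\<close> is the
  exponential of a linear form, so \<open>G\<close> lies above its tangent plane at \<open>x = opt_pol c\<close>.
  The recursion defining \<open>x\<close> says \<open>c * (P 0 + \<dots> + P (k - 1)) = x k\<close>, which turns the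
  first-order term towards a distribution \<open>q\<close> into a positive multiple of the relative
  entropy \<open>\<Sum>k. x k * ln (x k / q k)\<close>, nonnegative by Gibbs' inequality. The constant \<open>c\<close>
  is unique because \<open>\<Sum>i. x i\<close> is continuous and strictly increasing in \<open>c\<close>, vanishes at
  \<open>c = 0\<close> and is at least \<open>1\<close> at \<open>c = 1\<close>.\<close>

definition prefix_prod :: "(nat \<Rightarrow> real) \<Rightarrow> nat \<Rightarrow> real" where
  "prefix_prod q j = (\<Prod>i\<in>{1..j}. q i)"

lemma prefix_prod_0 [simp]: "prefix_prod q 0 = 1"
  by (simp add: prefix_prod_def)

lemma prefix_prod_Suc: "prefix_prod q (Suc j) = prefix_prod q j * q (Suc j)"
  by (simp add: prefix_prod_def)

lemma prefix_prod_nonneg: "(\<And>i. i \<in> {1..j} \<Longrightarrow> 0 \<le> q i) \<Longrightarrow> 0 \<le> prefix_prod q j"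
  unfolding prefix_prod_def by (rule prod_nonneg)

lemma prefix_prod_pos: "(\<And>i. i \<in> {1..j} \<Longrightarrow> 0 < q i) \<Longrightarrow> 0 < prefix_prod q j"
  unfolding prefix_prod_def by (rule prod_pos)

lemma prefix_prod_mono:
  "(\<And>i. i \<in> {1..j} \<Longrightarrow> 0 \<le> q i \<and> q i \<le> r i) \<Longrightarrow> prefix_prod q j \<le> prefix_prod r j"
  unfolding prefix_prod_def by (rule prod_mono)

lemma prefix_prod_split:
  "j \<le> K \<Longrightarrow> prefix_prod q K = prefix_prod q j * (\<Prod>k\<in>{Suc j..K}. q k)"
proof (induction K rule: dec_induct)
  case base then show ?case by simp
next
  case (step n) then show ?case by (simp add: prefix_prod_Suc)
qed

lemma trans_inflow_Suc:
  assumes "u < K"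
  shows "(\<Sum>w=0..K. p w * trans K q w (Suc u)) = p u * q (Suc u)"
proof -
  have "(\<Sum>w=0..K. p w * trans K q w (Suc u)) = (\<Sum>w=0..K. if w = u then p u * q (Suc u) else 0)"
    using assms by (intro sum.cong) (auto simp: trans_def)
  also have "\<dots> = p u * q (Suc u)" using assms by simp
  finally show ?thesis .
qed

lemma trans_inflow_0:
  "(\<Sum>w=0..K. p w * trans K q w 0) = (\<Sum>w<K. p w * (1 - q (Suc w))) + p K"
proof -
  have "(\<Sum>w=0..K. p w * trans K q w 0) = (\<Sum>w<K. p w * trans K q w 0) + p K"
    by (simp add: atLeast0AtMost lessThan_Suc_atMost[symmetric] trans_def)
  also have "(\<Sum>w<K. p w * trans K q w 0) = (\<Sum>w<K. p w * (1 - q (Suc w)))"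
    by (intro sum.cong) (auto simp: trans_def)
  finally show ?thesis .
qed

definition prefix_prod_dist :: "nat \<Rightarrow> (nat \<Rightarrow> real) \<Rightarrow> nat \<Rightarrow> real" where
  "prefix_prod_dist K q v = (if v \<le> K then prefix_prod q v / (\<Sum>u=0..K. prefix_prod q u) else 0)"

lemma sum_prefix_prod_pos:
  assumes "\<And>a. a \<in> {1..K} \<Longrightarrow> 0 \<le> q a"
  shows "0 < (\<Sum>u=0..K. prefix_prod q u)"
proof -
  have "prefix_prod q 0 \<le> (\<Sum>u=0..K. prefix_prod q u)"
    using assms by (intro member_le_sum prefix_prod_nonneg) auto
  then show ?thesis by simp
qed

lemma is_stationary_prefix_prod_dist:
  assumes q: "\<And>a. a \<in> {1..K} \<Longrightarrow> 0 \<le> q a"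
  shows "is_stationary K q (prefix_prod_dist K q)"
proof -
  let ?p = "prefix_prod_dist K q"
  have Z: "0 < (\<Sum>u=0..K. prefix_prod q u)" using q by (rule sum_prefix_prod_pos)
  have nonneg: "0 \<le> ?p v" for v
    using Z q by (auto simp: prefix_prod_dist_def intro!: divide_nonneg_pos prefix_prod_nonneg)
  have total: "(\<Sum>v=0..K. ?p v) = 1"
    using Z by (simp add: prefix_prod_dist_def sum_divide_distrib[symmetric])
  have outside: "?p v = 0" if "K < v" for v
    using that by (simp add: prefix_prod_dist_def)
  have balance: "?p v = (\<Sum>w=0..K. ?p w * trans K q w v)" if "v \<in> {0..K}" for v
  proof (cases v)
    case 0
    have "(\<Sum>w<K. ?p w * (1 - q (Suc w))) = (\<Sum>w<K. ?p w - ?p (Suc w))"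
      using Z by (intro sum.cong) (auto simp: prefix_prod_dist_def prefix_prod_Suc field_simps)
    then show ?thesis using 0 by (simp add: trans_inflow_0 sum_lessThan_telescope')
  next
    case (Suc u)
    then have "(\<Sum>w=0..K. ?p w * trans K q w v) = ?p u * q v"
      using that trans_inflow_Suc by simp
    then show ?thesis
      using Suc that by (simp add: prefix_prod_dist_def prefix_prod_Suc)
  qed
  show ?thesis
    unfolding is_stationary_def using nonneg outside total balance by blast
qed

lemma is_stationary_imp_eq_prefix_prod_dist:
  assumes p: "is_stationary K q p"
  shows "p = prefix_prod_dist K q"
proof -
  from p have total: "(\<Sum>v=0..K. p v) = 1" and outside: "\<forall>v. K < v \<longrightarrow> p v = 0"
    and balance: "\<forall>v\<in>{0..K}. p v = (\<Sum>w=0..K. p w * trans K q w v)"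
    unfolding is_stationary_def by blast+
  have recursion: "p (Suc v) = p v * q (Suc v)" if "v < K" for v
  proof -
    from that have "Suc v \<in> {0..K}" by simp
    with balance have "p (Suc v) = (\<Sum>w=0..K. p w * trans K q w (Suc v))" by blast
    also have "\<dots> = p v * q (Suc v)" using that by (rule trans_inflow_Suc)
    finally show ?thesis .
  qed
  have p_prefix: "p v = p 0 * prefix_prod q v" if "v \<in> {0..K}" for v
    using that
  proof (induction v)
    case (Suc v)
    then show ?case
      using recursion[of v] by (simp add: prefix_prod_Suc)
  qed simp
  have "1 = (\<Sum>v=0..K. p v)" using total by simp
  also have "\<dots> = (\<Sum>v=0..K. p 0 * prefix_prod q v)"
    by (rule sum.cong[OF refl p_prefix])
  also have "\<dots> = p 0 * (\<Sum>v=0..K. prefix_prod q v)"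
    by (simp add: sum_distrib_left)
  finally have p0: "p 0 = 1 / (\<Sum>v=0..K. prefix_prod q v)"
    by (auto simp: eq_divide_eq)
  show ?thesis
  proof
    fix v
    show "p v = prefix_prod_dist K q v"
      using outside p_prefix[of v] unfolding p0 by (auto simp: prefix_prod_dist_def)
  qed
qed

lemma avg_reward_eq:
  assumes "\<And>a. a \<in> {1..K} \<Longrightarrow> 0 \<le> q a"
  shows "avg_reward K q = prefix_prod q K / (\<Sum>v=0..K. prefix_prod q v)"
proof -
  have "stat_dist K q = prefix_prod_dist K q"
    unfolding stat_dist_def
    using is_stationary_prefix_prod_dist[OF assms] is_stationary_imp_eq_prefix_prod_dist
    by (rule the_equality)
  then show ?thesis by (simp add: avg_reward_def prefix_prod_dist_def)
qed

definition return_cost :: "nat \<Rightarrow> (nat \<Rightarrow> real) \<Rightarrow> real" where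
  "return_cost K q = (\<Sum>j<K. prefix_prod q j / prefix_prod q K)"

lemma avg_reward_eq_return_cost:
  assumes "\<And>a. a \<in> {1..K} \<Longrightarrow> 0 \<le> q a" and "0 < prefix_prod q K"
  shows "avg_reward K q = 1 / (1 + return_cost K q)"
proof -
  have "(\<Sum>v=0..K. prefix_prod q v) = (\<Sum>v<K. prefix_prod q v) + prefix_prod q K"
    by (simp add: atLeast0AtMost lessThan_Suc_atMost[symmetric])
  also have "\<dots> = prefix_prod q K * (1 + return_cost K q)"
    using assms(2) by (simp add: return_cost_def sum_divide_distrib[symmetric] field_simps)
  finally have "(\<Sum>v=0..K. prefix_prod q v) = prefix_prod q K * (1 + return_cost K q)" .
  moreover have "avg_reward K q = prefix_prod q K / (\<Sum>v=0..K. prefix_prod q v)"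
    using assms(1) by (rule avg_reward_eq)
  ultimately show ?thesis
    using assms(2) by simp
qed

lemma opt_pol_eq_sum: "opt_pol c k = c * (\<Sum>j<k. prefix_prod (opt_pol c) j)"
  by (induction c k rule: opt_pol.induct) (simp_all add: prefix_prod_def distrib_left)

lemma opt_pol_nonneg: "0 \<le> c \<Longrightarrow> 0 \<le> opt_pol c k"
proof (induction k rule: less_induct)
  case (less k)
  then have "0 \<le> prefix_prod (opt_pol c) j" if "j < k" for j
    using that by (intro prefix_prod_nonneg) auto
  then show ?case
    using less.prems by (subst opt_pol_eq_sum) (auto intro!: mult_nonneg_nonneg sum_nonneg)
qed

lemma sum_prefix_prod_opt_pol_ge_1:
  "0 \<le> c \<Longrightarrow> 1 \<le> k \<Longrightarrow> 1 \<le> (\<Sum>j<k. prefix_prod (opt_pol c) j)"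
  using member_le_sum[of 0 "{..<k}" "prefix_prod (opt_pol c)"]
  by (auto intro: prefix_prod_nonneg opt_pol_nonneg)

lemma opt_pol_ge: "0 \<le> c \<Longrightarrow> 1 \<le> k \<Longrightarrow> c \<le> opt_pol c k"
  using mult_left_mono[OF sum_prefix_prod_opt_pol_ge_1] by (subst opt_pol_eq_sum) auto

lemma opt_pol_pos: "0 < c \<Longrightarrow> 1 \<le> k \<Longrightarrow> 0 < opt_pol c k"
  using opt_pol_ge[of c k] by simp

lemma opt_pol_zero [simp]: "opt_pol 0 k = 0"
  by (subst opt_pol_eq_sum) simp

lemma opt_pol_mono: "0 \<le> c \<Longrightarrow> c \<le> d \<Longrightarrow> opt_pol c k \<le> opt_pol d k"
proof (induction k rule: less_induct)
  case (less k)
  then have "(\<Sum>j<k. prefix_prod (opt_pol c) j) \<le> (\<Sum>j<k. prefix_prod (opt_pol d) j)"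
    by (intro sum_mono prefix_prod_mono) (auto intro: opt_pol_nonneg)
  then have "c * (\<Sum>j<k. prefix_prod (opt_pol c) j) \<le> d * (\<Sum>j<k. prefix_prod (opt_pol d) j)"
    using less.prems by (intro mult_mono sum_nonneg prefix_prod_nonneg opt_pol_nonneg) auto
  then show ?case using opt_pol_eq_sum[of c k] opt_pol_eq_sum[of d k] by simp
qed

lemma opt_pol_strict_mono:
  assumes "0 \<le> c" "c < d" "1 \<le> k"
  shows "opt_pol c k < opt_pol d k"
proof -
  let ?S = "\<lambda>c. \<Sum>j<k. prefix_prod (opt_pol c) j"
  have "?S c \<le> ?S d"
    using assms by (intro sum_mono prefix_prod_mono) (auto intro: opt_pol_nonneg opt_pol_mono)
  then have "c * ?S c \<le> c * ?S d" using assms(1) by (rule mult_left_mono)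
  also have "\<dots> < d * ?S d"
    using assms sum_prefix_prod_opt_pol_ge_1[of d k] by (intro mult_strict_right_mono) auto
  finally show ?thesis using opt_pol_eq_sum[of c k] opt_pol_eq_sum[of d k] by simp
qed

lemma continuous_on_opt_pol: "continuous_on A (\<lambda>c. opt_pol c k)"
proof (induction k rule: less_induct)
  case (less k)
  have "continuous_on A (\<lambda>c. c * (\<Sum>j<k. \<Prod>i\<in>{1..j}. opt_pol c i))"
    using less by (intro continuous_intros) auto
  then show ?case
    by (subst opt_pol_eq_sum) (simp add: prefix_prod_def)
qed

lemma ex1_opt_pol_normalized:
  assumes "1 \<le> K"
  shows "\<exists>!c. 0 < c \<and> (\<Sum>i=1..K. opt_pol c i) = 1"
proof -
  let ?f = "\<lambda>c. \<Sum>i=1..K. opt_pol c i"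
  have "1 \<le> opt_pol 1 1" by (rule opt_pol_ge) auto
  also have "\<dots> \<le> ?f 1"
    using assms by (intro member_le_sum opt_pol_nonneg) auto
  finally have "1 \<le> ?f 1" .
  moreover have "continuous_on {0..1} ?f"
    by (intro continuous_on_sum continuous_on_opt_pol)
  ultimately obtain c where c: "0 \<le> c" "c \<le> 1" "?f c = 1"
    using IVT'[of ?f 0 1 1] by auto
  then have "0 < c" by (cases "c = 0") auto
  moreover have "?f a < ?f b" if "0 \<le> a" "a < b" for a b
    using that assms by (intro sum_strict_mono opt_pol_strict_mono) auto
  ultimately show ?thesis
    using c(3) by (metis linorder_neq_iff less_le)
qed

lemma gibbs_inequality:
  fixes x q :: "'a \<Rightarrow> real"
  assumes "\<And>k. k \<in> A \<Longrightarrow> 0 < x k" "\<And>k. k \<in> A \<Longrightarrow> 0 < q k" "sum q A \<le> sum x A"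
  shows "0 \<le> (\<Sum>k\<in>A. x k * ln (x k / q k))"
proof -
  have "x k - q k \<le> x k * ln (x k / q k)" if "k \<in> A" for k
  proof -
    have x: "0 < x k" and q: "0 < q k" using assms that by auto
    have "ln (q k / x k) \<le> q k / x k - 1" using x q by (intro ln_le_minus_one) simp
    then have "x k * (1 - q k / x k) \<le> x k * ln (x k / q k)"
      using x q by (intro mult_left_mono) (auto simp: ln_div)
    then show ?thesis using x by (simp add: algebra_simps)
  qed
  then have "(\<Sum>k\<in>A. x k - q k) \<le> (\<Sum>k\<in>A. x k * ln (x k / q k))" by (rule sum_mono)
  then show ?thesis using assms(3) by (simp add: sum_subtractf)
qed

lemma prefix_prod_quotient_eq_exp:
  assumes x: "\<And>k. k \<in> {1..K} \<Longrightarrow> 0 < x k" and q: "\<And>k. k \<in> {1..K} \<Longrightarrow> 0 < q k"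
    and "j \<le> K"
  shows "prefix_prod q j / prefix_prod q K =
    prefix_prod x j / prefix_prod x K * exp (\<Sum>k\<in>{Suc j..K}. ln (x k / q k))"
proof -
  have "exp (\<Sum>k\<in>{Suc j..K}. ln (x k / q k)) = (\<Prod>k\<in>{Suc j..K}. x k) / (\<Prod>k\<in>{Suc j..K}. q k)"
    using x q by (simp add: exp_sum prod_dividef)
  moreover have "prefix_prod x K = prefix_prod x j * (\<Prod>k\<in>{Suc j..K}. x k)"
    and "prefix_prod q K = prefix_prod q j * (\<Prod>k\<in>{Suc j..K}. q k)"
    using \<open>j \<le> K\<close> by (simp_all add: prefix_prod_split)
  moreover have "0 < prefix_prod x j" "0 < prefix_prod q j"
    using x q \<open>j \<le> K\<close> by (auto intro!: prefix_prod_pos)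
  moreover have "0 < (\<Prod>k\<in>{Suc j..K}. x k)" "0 < (\<Prod>k\<in>{Suc j..K}. q k)"
    using x q by (auto intro!: prod_pos)
  ultimately show ?thesis by (simp del: prod_zero_iff)
qed

lemma return_cost_ge_linearization:
  assumes x: "\<And>k. k \<in> {1..K} \<Longrightarrow> 0 < x k" and q: "\<And>k. k \<in> {1..K} \<Longrightarrow> 0 < q k"
  shows "return_cost K x
    + (\<Sum>k\<le>K. ln (x k / q k) * (\<Sum>j<k. prefix_prod x j)) / prefix_prod x K
    \<le> return_cost K q"
proof -
  define a where "a k = ln (x k / q k)" for k
  define w where "w j = prefix_prod x j / prefix_prod x K" for j
  have w_pos: "0 < w j" if "j \<le> K" for j
    using x that by (auto simp: w_def intro!: divide_pos_pos prefix_prod_pos)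
  have "return_cost K x + (\<Sum>k\<le>K. a k * (\<Sum>j<k. prefix_prod x j)) / prefix_prod x K
      = (\<Sum>j<K. w j) + (\<Sum>k\<le>K. \<Sum>j<k. w j * a k)"
    by (simp add: return_cost_def w_def sum_divide_distrib sum_distrib_left mult.commute)
  also have "\<dots> = (\<Sum>j<K. w j * (1 + (\<Sum>k\<in>{Suc j..K}. a k)))"
    by (simp add: sum.nested_swap' sum.distrib sum_distrib_left algebra_simps)
  also have "\<dots> \<le> (\<Sum>j<K. w j * exp (\<Sum>k\<in>{Suc j..K}. a k))"
    using w_pos by (intro sum_mono mult_left_mono) (auto simp: less_imp_le)
  also have "\<dots> = return_cost K q"
    unfolding return_cost_def a_def w_def
    by (intro sum.cong refl prefix_prod_quotient_eq_exp[symmetric] x q) auto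
  finally show ?thesis by (simp add: a_def)
qed

lemma return_cost_opt_pol_le:
  assumes c: "0 < c" "(\<Sum>i=1..K. opt_pol c i) = 1"
    and q: "\<And>k. k \<in> {1..K} \<Longrightarrow> 0 < q k" "(\<Sum>k=1..K. q k) \<le> 1"
  shows "return_cost K (opt_pol c) \<le> return_cost K q"
proof -
  let ?x = "opt_pol c"
  have x: "0 < ?x k" if "k \<in> {1..K}" for k
    using c(1) that by (simp add: opt_pol_pos)
  have "(\<Sum>k\<le>K. ?x k * ln (?x k / q k)) = (\<Sum>k=1..K. ?x k * ln (?x k / q k))"
    by (simp add: atLeast0AtMost[symmetric] sum.atLeast_Suc_atMost)
  also have "0 \<le> \<dots>"
    using x q c(2) by (intro gibbs_inequality) auto
  finally have "0 \<le> (\<Sum>k\<le>K. ?x k * ln (?x k / q k)) / c"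
    using c(1) by simp
  also have "\<dots> = (\<Sum>k\<le>K. ln (?x k / q k) * (\<Sum>j<k. prefix_prod ?x j))"
    using c(1) by (simp add: opt_pol_eq_sum[of c] sum_divide_distrib mult.commute)
  finally have "0 \<le> (\<Sum>k\<le>K. ln (?x k / q k) * (\<Sum>j<k. prefix_prod ?x j))" .
  moreover have "0 < prefix_prod ?x K" using x by (intro prefix_prod_pos)
  ultimately have "0 \<le> (\<Sum>k\<le>K. ln (?x k / q k) * (\<Sum>j<k. prefix_prod ?x j)) / prefix_prod ?x K"
    by simp
  moreover have "return_cost K ?x
      + (\<Sum>k\<le>K. ln (?x k / q k) * (\<Sum>j<k. prefix_prod ?x j)) / prefix_prod ?x K
      \<le> return_cost K q"
    using x q(1) by (rule return_cost_ge_linearization)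
  ultimately show ?thesis by linarith
qed

lemma avg_reward_le_opt_pol:
  assumes c: "0 < c" "(\<Sum>i=1..K. opt_pol c i) = 1" and q: "policy K q"
  shows "avg_reward K q \<le> avg_reward K (opt_pol c)"
proof -
  let ?x = "opt_pol c"
  have x: "0 < ?x k" if "k \<in> {1..K}" for k
    using c(1) that by (simp add: opt_pol_pos)
  have "0 < prefix_prod ?x K" using x by (rule prefix_prod_pos)
  then have x_reward: "avg_reward K ?x = 1 / (1 + return_cost K ?x)"
    using c(1) by (intro avg_reward_eq_return_cost opt_pol_nonneg) auto
  have x_cost: "0 \<le> return_cost K ?x"
    unfolding return_cost_def using c(1)
    by (intro sum_nonneg divide_nonneg_nonneg prefix_prod_nonneg opt_pol_nonneg) auto
  have q_nonneg: "\<And>a. a \<in> {1..K} \<Longrightarrow> 0 \<le> q a" using q by (simp add: policy_def)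
  show ?thesis
  proof (cases "\<forall>k\<in>{1..K}. 0 < q k")
    case True
    then have "0 < prefix_prod q K" by (intro prefix_prod_pos) auto
    then have "avg_reward K q = 1 / (1 + return_cost K q)"
      using q_nonneg by (intro avg_reward_eq_return_cost)
    moreover have "return_cost K ?x \<le> return_cost K q"
      using c True q by (intro return_cost_opt_pol_le) (auto simp: policy_def)
    ultimately show ?thesis using x_reward x_cost by (simp add: frac_le)
  next
    case False
    then obtain k where "k \<in> {1..K}" "q k = 0" using q_nonneg by force
    then have "prefix_prod q K = 0" unfolding prefix_prod_def by (intro prod_zero) auto
    moreover have "avg_reward K q = prefix_prod q K / (\<Sum>v=0..K. prefix_prod q v)"
      using q_nonneg by (rule avg_reward_eq)
    ultimately show ?thesis using x_reward x_cost by simp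
  qed
qed

theorem proposition10:
  fixes K :: nat
  assumes "1 \<le> K"
  shows "(\<exists>!c::real. 0 < c \<and> (\<Sum>i=1..K. opt_pol c i) = 1) \<and>
         (\<forall>c::real. 0 < c \<and> (\<Sum>i=1..K. opt_pol c i) = 1 \<longrightarrow>
            policy K (opt_pol c) \<and>
            (\<forall>q. policy K q \<longrightarrow> avg_reward K q \<le> avg_reward K (opt_pol c)))"
proof (intro conjI allI impI)
  show "\<exists>!c::real. 0 < c \<and> (\<Sum>i=1..K. opt_pol c i) = 1"
    using assms by (rule ex1_opt_pol_normalized)
next
  fix c :: real and q
  assume c: "0 < c \<and> (\<Sum>i=1..K. opt_pol c i) = 1"
  then show "policy K (opt_pol c)"
    by (simp add: policy_def opt_pol_nonneg)
  show "policy K q \<Longrightarrow> avg_reward K q \<le> avg_reward K (opt_pol c)"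
    using c by (intro avg_reward_le_opt_pol) auto
qed

end
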